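(* Let $H_\alpha(k)$, $k\in\mathbb T^d$, be the fiber magnetic Schrödinger operator on the fundamental graph $\mathcal G_*=(\mathcal V_*,\mathcal A_* )$ (see context), and let $\tau_+=\max_{\mathbf e\in\mathcal A_*}\|\tau(\mathbf e)\|$ (Euclidean norm). Then for each $n\in\mathbb N$: (i) $\displaystyle \operatorname{Tr}H_\alpha^n(k)=\sum_{j=1}^{\nu}\lambda_{\alpha,j}^n(k)=\mathcal T_{\alpha,n}(k)$, where $$\mathcal T_{\alpha,n}(k)=\sum_{\mathbf c\in\widetilde{\mathcal C}_n}\omega(\mathbf c)e^{-i\phi(\mathbf c,k)}=\sum_{\mathbf c\in\widetilde{\mathcal C}_n}\omega(\mathbf c)\cos\phi(\mathbf c,k),\qquad \phi(\mathbf c,k)=\alpha(\mathbf c)+\langle\tau(\mathbf c),k\rangle,$$ or, in the form of a Fourier series, $$\mathcal T_{\alpha,n}(k)=\sum_{\mathrm m\in\mathbb Z^d,\ \|\mathrm m\|\le n\tau_+}\mathcal T_{\alpha,n,\mathrm m}e^{-i\langle\mathrm m,k\rangle},\qquad \mathcal T_{\alpha,n,\mathrm m}=\sum_{\mathbf c\in\widetilde{\mathcal C}_n^{\mathrm m}}\omega(\mathbf c)e^{-i\alpha(\mathbf c)}.$$ (ii) $\displaystyle \frac1{(2\pi)^d}\int_{\mathbb T^d}\operatorname{Tr}H_\alpha^n(k)\,dk=\mathcal T_{\alpha,n,0}$, where $\displaystyle\mathcal T_{\alpha,n,0}=\sum_{\mathbf c\in\widetilde{\mathcal C}_n^0}\omega(\mathbf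 c)e^{-i\alpha(\mathbf c)}=\sum_{\mathbf c\in\widetilde{\mathcal C}_n^0}\omega(\mathbf c)\cos\alpha(\mathbf c)$.
   Context: Let $\Gamma\subset\mathbb R^d$ be a lattice with basis $\mathfrak a_1,\dots,\mathfrak a_d$ and fundamental cell $\Omega=\{\sum_s x_s\mathfrak a_s:(x_s)\in[0,1)^d\}$. Let $\mathcal G=(\mathcal V,\mathcal E)$ be a connected, locally finite, infinite graph embedded in $\mathbb R^d$ (loops and multiple edges allowed), invariant under translations by $\Gamma$, whose quotient $\mathcal G_*=\mathcal G/\Gamma=(\mathcal V_*,\mathcal E_* )$ (fundamental graph) is finite; $\nu=\#\mathcal V_*$. Each unoriented edge gives two oriented edges; $\mathcal A$, $\mathcal A_*=\mathcal A/\Gamma$ are the sets of oriented edges of $\mathcal G,\mathcal G_*$; $(x,y)$ is an oriented edge from $x$ to $y$ and $\underline{\mathbf e}$ the inverse of $\mathbf e$. The degree $\varkappa_x$ is the number of oriented edges starting at $x$ (loops counted twice). Edge index: each $x\in\mathcal V$ is uniquely $x=x_0+[x]$ with $x_0\in\mathcal V\cap\Omega$, $[x]\in\Gamma$; let $[x]_{\mathbb A}\in\mathbb Z^d$ be the coordinates of $[x]$ in the basis $(\mathfrak a_s)$; for $\mathbf e=(x,y)\in\mathcal A$, $\tau(\mathbf e)=[y]_{\mathbb A}-[x]_{\mathbb A}\in\mathbb Z^d$; this is $\Gamma$-invariant and so defines $\tau$ on $\mathcal A_*$, with $\tau(\underline{\mathbf e})=-\tau(\mathbf e)$. A periodic magnetic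 potential is $\alpha:\mathcal A\to\mathbb R$ with $\alpha(\underline{\mathbf e})=-\alpha(\mathbf e)$ and $\alpha(\mathbf e+\gamma)=\alpha(\mathbf e)$ for $\gamma\in\Gamma$ (hence defined on $\mathcal A_*$); a periodic electric potential is a $\Gamma$-periodic $V:\mathcal V\to\mathbb R$ (regarded as a function on $\mathcal V_*$). For $k\in\mathbb T^d=\mathbb R^d/(2\pi\mathbb Z)^d$, the fiber operator on $\ell^2(\mathcal V_* )=\mathbb C^\nu$ is $H_\alpha(k)=-\Delta_\alpha(k)+V$, $\Delta_\alpha(k)=\varkappa-A_\alpha(k)$, where $(Vf)_x=V_xf_x$, $(\varkappa f)_x=\varkappa_xf_x$, $(A_\alpha(k)f)_x=\sum_{\mathbf e=(x,y)\in\mathcal A_*}e^{i(\alpha(\mathbf e)+\langle\tau(\mathbf e),k\rangle)}f_y$; its eigenvalues are $\lambda_{\alpha,1}(k)\le\dots\le\lambda_{\alpha,\nu}(k)$. Cycles: a path is a sequence of oriented edges $(\mathbf e_1,\dots,\mathbf e_n)$ with $\mathbf e_s=(x_{s-1},x_s)$; it is a cycle if $x_n=x_0$, of length $|\mathbf c|=n$. Cycles are ordered edge sequences (distinct cyclic shifts are distinct cycles) and backtracking cycles are included. For a cycle $\mathbf c$: index $\tau(\mathbf c)=\sum_{\mathbf e\in\mathbf c}\tau(\mathbf e)\in\mathbb Z^d$, flux $\alpha(\mathbf c)=(\sum_{\mathbf e\in\mathbf c}\alpha(\mathbf e))\bmod 2\pi$. Modified fundamental graph $\widetilde{\mathcal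 G}_*$: add at each $x\in\mathcal V_*$ one extra oriented loop $\mathbf e_x$ (a single oriented edge, $\underline{\mathbf e_x}=\mathbf e_x$) with $\tau(\mathbf e_x)=0$, $\alpha(\mathbf e_x)=0$. Weights: $\omega(\mathbf e)=1$ for $\mathbf e\in\mathcal A_*$, $\omega(\mathbf e_x)=v_x:=V_x-\varkappa_x$; for a cycle $\mathbf c=(\mathbf e_1,\dots,\mathbf e_n)$ of $\widetilde{\mathcal G}_*$, $\omega(\mathbf c)=\omega(\mathbf e_1)\cdots\omega(\mathbf e_n)$. $\widetilde{\mathcal C}_n$ is the set of cycles of length $n$ in $\widetilde{\mathcal G}_*$ and $\widetilde{\mathcal C}_n^{\mathrm m}$ the subset of those with index $\mathrm m\in\mathbb Z^d$. *)

theory Defs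
  imports "HOL-Analysis.Analysis" "Jordan_Normal_Form.Char_Poly"
begin

text \<open>Fundamental graph: vertices are 0..<nu, oriented edges are the elements of a
finite type 'e, with source/target maps, edge inversion einv, edge index tau (in Z^d,
d = CARD('d)) and magnetic potential alpha.\<close>

definition fundamental_graph ::
  "nat \<Rightarrow> ('e::finite \<Rightarrow> nat) \<Rightarrow> ('e \<Rightarrow> nat) \<Rightarrow> ('e \<Rightarrow> 'e) \<Rightarrow> ('e \<Rightarrow> int^'d::finite) \<Rightarrow> bool" where
  "fundamental_graph nu src tgt einv tau \<longleftrightarrow>
     1 \<le> nu \<and> (\<forall>e. src e < nu \<and> tgt e < nu) \<and>
     (\<forall>e. einv (einv e) = e \<and> einv e \<noteq> e \<and> src (einv e) = tgt e \<and> tgt (einv e) = src e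
          \<and> tau (einv e) = - tau e)"

definition magnetic_potential :: "('e \<Rightarrow> 'e) \<Rightarrow> ('e \<Rightarrow> real) \<Rightarrow> bool" where
  "magnetic_potential einv alpha \<longleftrightarrow> (\<forall>e. alpha (einv e) = - alpha e)"

fun walk :: "('e \<Rightarrow> nat) \<Rightarrow> ('e \<Rightarrow> nat) \<Rightarrow> nat \<Rightarrow> 'e list \<Rightarrow> nat \<Rightarrow> bool" where
  "walk src tgt x [] y = (x = y)"
| "walk src tgt x (e # p) y = (src e = x \<and> walk src tgt (tgt e) p y)"

text \<open>Connectedness of the periodic graph G: vertex x + m (x in V_*, m in Z^d) of G is
reachable from every vertex x0 + 0; equivalently every (y, m) reachable from (x, 0).\<close>
definition periodic_connected ::
  "nat \<Rightarrow> ('e \<Rightarrow> nat) \<Rightarrow> ('e \<Rightarrow> nat) \<Rightarrow> ('e \<Rightarrow> int^'d::finite) \<Rightarrow> bool" where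
  "periodic_connected nu src tgt tau \<longleftrightarrow>
     (\<forall>x<nu. \<forall>y<nu. \<forall>m. \<exists>p. walk src tgt x p y \<and> sum_list (map tau p) = m)"

definition deg :: "('e::finite \<Rightarrow> nat) \<Rightarrow> nat \<Rightarrow> nat" where
  "deg src x = card {e. src e = x}"

definition ip :: "int^'d::finite \<Rightarrow> real^'d \<Rightarrow> real" where
  "ip m k = (\<Sum>i\<in>UNIV. real_of_int (m $ i) * k $ i)"

definition ivnorm :: "int^'d::finite \<Rightarrow> real" where
  "ivnorm m = sqrt (\<Sum>i\<in>UNIV. (real_of_int (m $ i))^2)"

definition mat_trace :: "complex Matrix.mat \<Rightarrow> complex" where
  "mat_trace A = (\<Sum>i<dim_row A. A $$ (i, i))"

text \<open>Fiber operator H_alpha(k) = -Delta_alpha(k) + V = A_alpha(k) - kappa + V.\<close>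
definition fiber_op ::
  "nat \<Rightarrow> ('e::finite \<Rightarrow> nat) \<Rightarrow> ('e \<Rightarrow> nat) \<Rightarrow> ('e \<Rightarrow> int^'d::finite) \<Rightarrow> ('e \<Rightarrow> real)
   \<Rightarrow> (nat \<Rightarrow> real) \<Rightarrow> real^'d \<Rightarrow> complex Matrix.mat" where
  "fiber_op nu src tgt tau alpha V k = Matrix.mat nu nu (\<lambda>(x, y).
      (\<Sum>e\<in>{e. src e = x \<and> tgt e = y}. exp (\<i> * complex_of_real (alpha e + ip (tau e) k)))
      + (if x = y then complex_of_real (V x - real (deg src x)) else 0))"

text \<open>Modified fundamental graph: oriented edges Inl e (e in A_*) and Inr x (the extra loop at x).\<close>
fun msrc :: "('e \<Rightarrow> nat) \<Rightarrow> 'e + nat \<Rightarrow> nat" where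
  "msrc src (Inl e) = src e" | "msrc src (Inr x) = x"
fun mtgt :: "('e \<Rightarrow> nat) \<Rightarrow> 'e + nat \<Rightarrow> nat" where
  "mtgt tgt (Inl e) = tgt e" | "mtgt tgt (Inr x) = x"
fun mvalid :: "nat \<Rightarrow> 'e + nat \<Rightarrow> bool" where
  "mvalid nu (Inl e) = True" | "mvalid nu (Inr x) = (x < nu)"
fun momega :: "('e::finite \<Rightarrow> nat) \<Rightarrow> (nat \<Rightarrow> real) \<Rightarrow> 'e + nat \<Rightarrow> real" where
  "momega src V (Inl e) = 1" | "momega src V (Inr x) = V x - real (deg src x)"
fun mtau :: "('e \<Rightarrow> int^'d::finite) \<Rightarrow> 'e + nat \<Rightarrow> int^'d" where
  "mtau tau (Inl e) = tau e" | "mtau tau (Inr x) = 0"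
fun malpha :: "('e \<Rightarrow> real) \<Rightarrow> 'e + nat \<Rightarrow> real" where
  "malpha alpha (Inl e) = alpha e" | "malpha alpha (Inr x) = 0"

text \<open>Cycles of length n in the modified graph (ordered edge sequences, closed).\<close>
definition mcycles :: "nat \<Rightarrow> ('e \<Rightarrow> nat) \<Rightarrow> ('e \<Rightarrow> nat) \<Rightarrow> nat \<Rightarrow> ('e + nat) list set" where
  "mcycles nu src tgt n = {c. length c = n \<and> (\<forall>a\<in>set c. mvalid nu a) \<and>
      (\<forall>i<n. mtgt tgt (c ! i) = msrc src (c ! (Suc i mod n)))}"

definition cyc_weight :: "('e::finite \<Rightarrow> nat) \<Rightarrow> (nat \<Rightarrow> real) \<Rightarrow> ('e + nat) list \<Rightarrow> real" where
  "cyc_weight src V c = prod_list (map (momega src V) c)"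
definition cyc_index :: "('e \<Rightarrow> int^'d::finite) \<Rightarrow> ('e + nat) list \<Rightarrow> int^'d" where
  "cyc_index tau c = sum_list (map (mtau tau) c)"
definition cyc_flux :: "('e \<Rightarrow> real) \<Rightarrow> ('e + nat) list \<Rightarrow> real" where
  "cyc_flux alpha c = sum_list (map (malpha alpha) c)"
  (* flux taken as a real representative; only used through cos / exp, so mod 2pi is immaterial *)

definition cyc_phase :: "('e \<Rightarrow> int^'d::finite) \<Rightarrow> ('e \<Rightarrow> real) \<Rightarrow> ('e + nat) list \<Rightarrow> real^'d \<Rightarrow> real" where
  "cyc_phase tau alpha c k = cyc_flux alpha c + ip (cyc_index tau c) k"

definition trace_T ::
  "nat \<Rightarrow> ('e::finite \<Rightarrow> nat) \<Rightarrow> ('e \<Rightarrow> nat) \<Rightarrow> ('e \<Rightarrow> int^'d::finite) \<Rightarrow> ('e \<Rightarrow> real)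
   \<Rightarrow> (nat \<Rightarrow> real) \<Rightarrow> nat \<Rightarrow> real^'d \<Rightarrow> complex" where
  "trace_T nu src tgt tau alpha V n k =
     (\<Sum>c\<in>mcycles nu src tgt n. complex_of_real (cyc_weight src V c)
          * exp (- \<i> * complex_of_real (cyc_phase tau alpha c k)))"

definition trace_Tm ::
  "nat \<Rightarrow> ('e::finite \<Rightarrow> nat) \<Rightarrow> ('e \<Rightarrow> nat) \<Rightarrow> ('e \<Rightarrow> int^'d::finite) \<Rightarrow> ('e \<Rightarrow> real)
   \<Rightarrow> (nat \<Rightarrow> real) \<Rightarrow> nat \<Rightarrow> int^'d \<Rightarrow> complex" where
  "trace_Tm nu src tgt tau alpha V n m =
     (\<Sum>c\<in>{c\<in>mcycles nu src tgt n. cyc_index tau c = m}. complex_of_real (cyc_weight src V c)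
          * exp (- \<i> * complex_of_real (cyc_flux alpha c)))"

definition tau_plus :: "('e::finite \<Rightarrow> int^'d::finite) \<Rightarrow> real" where
  "tau_plus tau = Max (range (\<lambda>e. ivnorm (tau e)))"

end

theory Submission
  imports Defs "Jordan_Normal_Form.Schur_Decomposition"
begin

text \<open>The fiber operator \<open>H(k)\<close> is the weighted adjacency matrix of the modified fundamental
  graph: its \<open>(x, y)\<close> entry is the sum, over the oriented edges \<open>a\<close> from \<open>x\<close> to \<open>y\<close>
  (including the extra loop at \<open>x\<close>, which carries \<open>V x - deg x\<close>), of
  \<open>\<omega>(a) exp (\<i> (\<alpha>(a) + \<langle>\<tau>(a), k\<rangle>))\<close>. Hence \<open>tr H(k)^n\<close> is the sum of
  \<open>\<omega>(c) exp (\<i> \<phi>(c, k))\<close> over the closed walks \<open>c\<close> of length \<open>n\<close>, i.e. over the cycles, and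
  Schur triangularization identifies it with the sum of the \<open>n\<close>-th powers of the eigenvalues.
  Reversing a cycle (inverting every edge and reversing their order) is an involution on cycles
  that preserves \<open>\<omega>\<close> and negates index, flux and phase, so \<open>exp (\<i> \<phi>)\<close> may be replaced by
  \<open>exp (- \<i> \<phi>)\<close> or by \<open>cos \<phi>\<close>. Grouping the cycles by their index \<open>m\<close>, which satisfies
  \<open>|m| \<le> n \<tau>\<^sub>+\<close>, gives a trigonometric polynomial in \<open>k\<close>, and integration over the torus
  \<open>[0, 2\<pi>]^d\<close> keeps only its constant term.\<close>

no_notation Matrix.vec_index (infixl \<open>$\<close> 100)
no_notation Matrix.scalar_prod (infix \<open>\<bullet>\<close> 70)

section \<open>Traces of matrix powers\<close>

lemma mat_trace_mult_comm:
  fixes A B :: "complex Matrix.mat"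
  assumes A: "A \<in> carrier_mat n m" and B: "B \<in> carrier_mat m n"
  shows "mat_trace (A * B) = mat_trace (B * A)"
proof -
  have "mat_trace (A * B) = (\<Sum>i<n. \<Sum>j<m. A $$ (i, j) * B $$ (j, i))"
    using A B by (simp add: mat_trace_def scalar_prod_def atLeast0LessThan)
  also have "\<dots> = (\<Sum>j<m. \<Sum>i<n. B $$ (j, i) * A $$ (i, j))"
    by (subst sum.swap) (simp add: mult.commute)
  also have "\<dots> = mat_trace (B * A)"
    using A B by (simp add: mat_trace_def scalar_prod_def atLeast0LessThan)
  finally show ?thesis .
qed

lemma upper_triangular_mult:
  fixes A B :: "'a::comm_semiring_1 Matrix.mat"
  assumes A: "A \<in> carrier_mat n n" and B: "B \<in> carrier_mat n n"
    and uA: "upper_triangular A" and uB: "upper_triangular B"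
  shows "upper_triangular (A * B)"
    and "i < n \<Longrightarrow> (A * B) $$ (i, i) = A $$ (i, i) * B $$ (i, i)"
proof -
  have entry: "(A * B) $$ (i, j) = (\<Sum>l\<in>{i..j}. A $$ (i, l) * B $$ (l, j))"
    if "i < n" "j < n" for i j
  proof -
    have "(A * B) $$ (i, j) = (\<Sum>l\<in>{0..<n}. A $$ (i, l) * B $$ (l, j))"
      using A B that by (simp add: scalar_prod_def)
    also have "\<dots> = (\<Sum>l\<in>{i..j}. A $$ (i, l) * B $$ (l, j))"
      using A B uA uB that by (intro sum.mono_neutral_right) (auto simp: upper_triangular_def)
    finally show ?thesis .
  qed
  show "upper_triangular (A * B)"
  proof (rule upper_triangularI)
    fix i j assume "j < i" "i < dim_row (A * B)"
    then show "(A * B) $$ (i, j) = 0" using A entry[of i j] by simp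
  qed
  show "i < n \<Longrightarrow> (A * B) $$ (i, i) = A $$ (i, i) * B $$ (i, i)"
    by (simp add: entry)
qed

lemma upper_triangular_pow_mat:
  fixes A :: "'a::comm_semiring_1 Matrix.mat"
  assumes A: "A \<in> carrier_mat n n" and uA: "upper_triangular A"
  shows "upper_triangular (A ^\<^sub>m k) \<and> (\<forall>i<n. (A ^\<^sub>m k) $$ (i, i) = A $$ (i, i) ^ k)"
proof (induction k)
  case 0
  then show ?case using A by auto
next
  case (Suc k)
  then show ?case
    using upper_triangular_mult[OF pow_carrier_mat[OF A] A] uA by (simp add: power_commutes)
qed

lemma proots_prod_linear_factors:
  "proots (\<Prod>a\<leftarrow>as. [:- a, 1:]) = mset (as :: 'a::idom list)"
proof (induction as)
  case (Cons a as)
  have "(\<Prod>a\<leftarrow>as. [:- a, 1:]) \<noteq> 0"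
    by (auto simp: prod_list_zero_iff)
  then have "proots ([:- a, 1:] * (\<Prod>a\<leftarrow>as. [:- a, 1:])) = {#a#} + mset as"
    using Cons.IH by (subst proots_mult) auto
  then show ?case by simp
qed simp

lemma mat_trace_pow_eq_sum_eigenvalue_powers:
  fixes A :: "complex Matrix.mat"
  assumes A: "A \<in> carrier_mat n n"
  shows "mat_trace (A ^\<^sub>m k) = sum_mset (image_mset (\<lambda>l. l ^ k) (proots (char_poly A)))"
proof -
  obtain as where cp: "char_poly A = (\<Prod>a\<leftarrow>as. [:- a, 1:])"
    using char_poly_factorized[OF A] by blast
  obtain B P Q where sd: "schur_decomposition A as = (B, P, Q)"
    by (cases "schur_decomposition A as") auto
  from schur_decomposition[OF A cp sd] have sim: "similar_mat_wit A B P Q"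
    and uB: "upper_triangular B" and dB: "diag_mat B = as" by auto
  from sim A have B: "B \<in> carrier_mat n n" and P: "P \<in> carrier_mat n n"
    and Q: "Q \<in> carrier_mat n n" and QP: "Q * P = 1\<^sub>m n"
    unfolding similar_mat_wit_def Let_def by auto
  have "mat_trace (A ^\<^sub>m k) = mat_trace (P * B ^\<^sub>m k * Q)"
    using similar_mat_wit_pow_id[OF sim] by simp
  also have "\<dots> = mat_trace (Q * (P * B ^\<^sub>m k))"
    using B P Q by (intro mat_trace_mult_comm) auto
  also have "Q * (P * B ^\<^sub>m k) = B ^\<^sub>m k"
    using B P Q QP by (simp flip: assoc_mult_mat[of Q n n P n "B ^\<^sub>m k" n])
  also have "mat_trace (B ^\<^sub>m k) = (\<Sum>i<n. B $$ (i, i) ^ k)"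
    using upper_triangular_pow_mat[OF B uB, of k] B by (simp add: mat_trace_def)
  also have "\<dots> = sum_list (map (\<lambda>l. l ^ k) as)"
    unfolding dB[symmetric] diag_mat_def using B
    by (simp add: interv_sum_list_conv_sum_set_nat atLeast0LessThan o_def)
  also have "\<dots> = sum_mset (image_mset (\<lambda>l. l ^ k) (proots (char_poly A)))"
    by (simp add: cp proots_prod_linear_factors flip: sum_mset_sum_list)
  finally show ?thesis .
qed

section \<open>Walks and powers of weighted adjacency matrices\<close>

lemma walk_iff_map: "walk s t x p y \<longleftrightarrow> map s p @ [y] = x # map t p"
  by (induction p arbitrary: x) auto

lemma walk_hd: "walk s t x p y \<Longrightarrow> p \<noteq> [] \<Longrightarrow> s (hd p) = x"
  by (cases p) auto

lemma walk_snoc: "walk s t x (p @ [a]) y \<longleftrightarrow> walk s t x p (s a) \<and> t a = y"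
  by (induction p arbitrary: x) auto

lemma closed_walk_iff_rotate1: "(\<exists>x. walk s t x p x) \<longleftrightarrow> map t p = rotate1 (map s p)"
  by (cases p) (auto simp: walk_iff_map)

lemma map_eq_rotate1_map_iff:
  "map t p = rotate1 (map s p) \<longleftrightarrow> (\<forall>i<length p. t (p ! i) = s (p ! (Suc i mod length p)))"
proof -
  have "map t p = rotate1 (map s p) \<longleftrightarrow> (\<forall>i<length p. map t p ! i = rotate1 (map s p) ! i)"
    by (simp add: list_eq_iff_nth_eq)
  also have "\<dots> \<longleftrightarrow> (\<forall>i<length p. t (p ! i) = s (p ! (Suc i mod length p)))"
  proof (intro all_cong imp_cong refl)
    fix i assume "i < length p"
    then have "Suc i mod length p < length p" by (intro mod_less_divisor) linarith
    then show "map t p ! i = rotate1 (map s p) ! i \<longleftrightarrow> t (p ! i) = s (p ! (Suc i mod length p))"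
      using \<open>i < length p\<close> by (simp add: nth_rotate1)
  qed
  finally show ?thesis .
qed

lemma walk_rev_map:
  assumes "\<And>a. s (r a) = t a" and "\<And>a. t (r a) = s a"
  shows "walk s t y (rev (map r p)) x \<longleftrightarrow> walk s t x p y"
proof -
  have "map s (rev (map r p)) = rev (map t p)" "map t (rev (map r p)) = rev (map s p)"
    using assms by (simp_all add: rev_map o_def)
  then have "walk s t y (rev (map r p)) x \<longleftrightarrow> rev (x # map t p) = rev (map s p @ [y])"
    by (simp add: walk_iff_map eq_commute)
  also have "\<dots> \<longleftrightarrow> walk s t x p y"
    by (simp only: rev_is_rev_conv walk_iff_map eq_commute)
  finally show ?thesis .
qed

lemma lists_length_Suc_eq_snoc:
  "{xs. set xs \<subseteq> A \<and> length xs = Suc n} =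
    (\<lambda>(xs, a). xs @ [a]) ` ({xs. set xs \<subseteq> A \<and> length xs = n} \<times> A)"
  by (auto simp: length_Suc_conv_rev)

lemma pow_mat_entry_eq_walk_sum:
  fixes A :: "'a::comm_semiring_1 Matrix.mat" and w :: "'b \<Rightarrow> 'a"
  assumes A: "A \<in> carrier_mat N N" and E: "finite E" "\<And>a. a \<in> E \<Longrightarrow> s a < N"
    and entry: "\<And>x y. x < N \<Longrightarrow> y < N \<Longrightarrow>
                  A $$ (x, y) = (\<Sum>a\<in>E. if s a = x \<and> t a = y then w a else 0)"
    and x: "x < N" and y: "y < N"
  shows "(A ^\<^sub>m n) $$ (x, y) =
    (\<Sum>p\<in>{p. set p \<subseteq> E \<and> length p = n}. if walk s t x p y then prod_list (map w p) else 0)"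
  using y
proof (induction n arbitrary: y)
  case 0
  have "{p. set p \<subseteq> E \<and> length p = 0} = {[]}" by auto
  then show ?case using A x 0 by simp
next
  case (Suc n)
  let ?L = "\<lambda>n. {p. set p \<subseteq> E \<and> length p = n}"
  let ?W = "\<lambda>y p. if walk s t x p y then prod_list (map w p) else 0"
  have "(A ^\<^sub>m Suc n) $$ (x, y) = (\<Sum>z<N. (A ^\<^sub>m n) $$ (x, z) * A $$ (z, y))"
    using A x Suc.prems by (simp add: scalar_prod_def atLeast0LessThan)
  also have "\<dots> = (\<Sum>z<N. \<Sum>p\<in>?L n. \<Sum>a\<in>E.
                     if s a = z \<and> t a = y then ?W z p * w a else 0)"
    using Suc.IH Suc.prems entry
    by (simp add: sum_product if_distrib[of "\<lambda>u. _ * u"] if_distrib[of "\<lambda>u. u * _"] conj_commute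
             cong: if_cong)
  also have "\<dots> = (\<Sum>p\<in>?L n. \<Sum>a\<in>E. \<Sum>z<N.
                     if s a = z \<and> t a = y then ?W z p * w a else 0)"
    by (subst sum.swap, rule sum.cong[OF refl], rule sum.swap)
  also have "\<dots> = (\<Sum>p\<in>?L n. \<Sum>a\<in>E. ?W y (p @ [a]))"
  proof (intro sum.cong refl)
    fix p a assume "a \<in> E"
    then have "(\<Sum>z<N. if s a = z \<and> t a = y then f z else 0) = (if t a = y then f (s a) else 0)"
      for f :: "nat \<Rightarrow> 'a"
      using E(2) by (simp add: conj_commute[of "s a = _"] flip: if_if_eq_conj)
    then show "(\<Sum>z<N. if s a = z \<and> t a = y then ?W z p * w a else 0) = ?W y (p @ [a])"
      by (simp add: walk_snoc)
  qed
  also have "\<dots> = (\<Sum>q\<in>?L (Suc n). ?W y q)"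
    by (simp add: lists_length_Suc_eq_snoc sum.reindex inj_on_def sum.cartesian_product case_prod_beta)
  finally show ?case .
qed

lemma mat_trace_pow_eq_closed_walk_sum:
  fixes A :: "complex Matrix.mat"
  assumes A: "A \<in> carrier_mat N N" and E: "finite E" "\<And>a. a \<in> E \<Longrightarrow> s a < N"
    and entry: "\<And>x y. x < N \<Longrightarrow> y < N \<Longrightarrow>
                  A $$ (x, y) = (\<Sum>a\<in>E. if s a = x \<and> t a = y then w a else 0)"
    and n: "1 \<le> n"
  shows "mat_trace (A ^\<^sub>m n) =
    (\<Sum>p\<in>{p. set p \<subseteq> E \<and> length p = n \<and> map t p = rotate1 (map s p)}. prod_list (map w p))"
proof -
  let ?L = "{p. set p \<subseteq> E \<and> length p = n}"
  let ?P = "\<lambda>p. prod_list (map w p)"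
  have "mat_trace (A ^\<^sub>m n) = (\<Sum>x<N. \<Sum>p\<in>?L. if walk s t x p x then ?P p else 0)"
    using A by (simp add: mat_trace_def pow_mat_entry_eq_walk_sum[OF A E entry])
  also have "\<dots> = (\<Sum>p\<in>?L. \<Sum>x<N. if walk s t x p x then ?P p else 0)"
    by (rule sum.swap)
  also have "\<dots> = (\<Sum>p\<in>?L. if map t p = rotate1 (map s p) then ?P p else 0)"
  proof (intro sum.cong refl)
    fix p assume p: "p \<in> ?L"
    then have "p \<noteq> []" using n by auto
    then have "s (hd p) < N" using p E(2) hd_in_set by blast
    then have "(\<Sum>x<N. if walk s t x p x then ?P p else 0)
             = (\<Sum>x<N. if x = s (hd p) then (if walk s t x p x then ?P p else 0) else 0)"
      using \<open>p \<noteq> []\<close> by (intro sum.cong refl) (auto dest: walk_hd)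
    also have "\<dots> = (if \<exists>x. walk s t x p x then ?P p else 0)"
      using \<open>p \<noteq> []\<close> \<open>s (hd p) < N\<close> by (auto dest: walk_hd)
    finally show "(\<Sum>x<N. if walk s t x p x then ?P p else 0)
                = (if map t p = rotate1 (map s p) then ?P p else 0)"
      by (simp only: closed_walk_iff_rotate1)
  qed
  also have "\<dots> = (\<Sum>p\<in>{p\<in>?L. map t p = rotate1 (map s p)}. ?P p)"
    by (rule sum.inter_filter[symmetric]) (simp add: finite_lists_length_eq E(1))
  also have "{p\<in>?L. map t p = rotate1 (map s p)}
           = {p. set p \<subseteq> E \<and> length p = n \<and> map t p = rotate1 (map s p)}"
    by auto
  finally show ?thesis .
qed

section \<open>The fiber operator as a weighted adjacency matrix\<close>

definition medges :: "nat \<Rightarrow> ('e + nat) set" where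
  "medges nu = {a. mvalid nu a}"

lemma medges_eq: "medges nu = range Inl \<union> Inr ` {..<nu}"
  unfolding medges_def by (auto elim: mvalid.elims)

lemma finite_medges: "finite (medges nu :: ('e::finite + nat) set)"
  by (simp add: medges_eq)

lemma msrc_medges_less:
  assumes "fundamental_graph nu src tgt einv tau" and "a \<in> medges nu"
  shows "msrc src a < nu"
  using assms by (cases a) (auto simp: medges_def fundamental_graph_def)

lemma mcycles_eq:
  "mcycles nu src tgt n =
     {c. set c \<subseteq> medges nu \<and> length c = n \<and> map (mtgt tgt) c = rotate1 (map (msrc src) c)}"
  unfolding mcycles_def medges_def map_eq_rotate1_map_iff by blast

lemma ip_add: "ip (a + b) k = ip a k + ip b k"
  by (simp add: ip_def distrib_right sum.distrib)

lemma ip_zero [simp]: "ip 0 k = 0"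
  by (simp add: ip_def)

lemma ip_uminus: "ip (- a) k = - ip a k"
  by (simp add: ip_def sum_negf)

definition medge_weight ::
  "('e::finite \<Rightarrow> nat) \<Rightarrow> ('e \<Rightarrow> int^'d::finite) \<Rightarrow> ('e \<Rightarrow> real) \<Rightarrow> (nat \<Rightarrow> real)
   \<Rightarrow> real^'d \<Rightarrow> 'e + nat \<Rightarrow> complex" where
  "medge_weight src tau alpha V k a = complex_of_real (momega src V a)
      * exp (\<i> * complex_of_real (malpha alpha a + ip (mtau tau a) k))"

lemma fiber_op_carrier: "fiber_op nu src tgt tau alpha V k \<in> carrier_mat nu nu"
  by (simp add: fiber_op_def)

lemma fiber_op_entry:
  assumes "x < nu" and "y < nu"
  shows "fiber_op nu src tgt tau alpha V k $$ (x, y) =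
    (\<Sum>a\<in>medges nu. if msrc src a = x \<and> mtgt tgt a = y then medge_weight src tau alpha V k a else 0)"
    (is "_ = sum ?f _")
proof -
  have "sum ?f (medges nu) = (\<Sum>e\<in>UNIV. ?f (Inl e)) + (\<Sum>z<nu. ?f (Inr z))"
    unfolding medges_eq by (subst sum.union_disjoint) (auto simp: sum.reindex)
  moreover have "(\<Sum>e\<in>UNIV. ?f (Inl e))
      = (\<Sum>e\<in>{e. src e = x \<and> tgt e = y}. exp (\<i> * complex_of_real (alpha e + ip (tau e) k)))"
    by (simp add: medge_weight_def sum.If_cases)
  moreover have "(\<Sum>z<nu. ?f (Inr z)) = (if x = y then complex_of_real (V x - real (deg src x)) else 0)"
    using assms by (cases "x = y") (auto simp: medge_weight_def intro: sum.neutral)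
  ultimately show ?thesis
    using assms by (simp add: fiber_op_def)
qed

lemma prod_list_medge_weight:
  "prod_list (map (medge_weight src tau alpha V k) c)
     = complex_of_real (cyc_weight src V c) * exp (\<i> * complex_of_real (cyc_phase tau alpha c k))"
proof (induction c)
  case Nil
  then show ?case by (simp add: cyc_weight_def cyc_phase_def cyc_flux_def cyc_index_def)
next
  case (Cons a c)
  have "cyc_phase tau alpha (a # c) k = (malpha alpha a + ip (mtau tau a) k) + cyc_phase tau alpha c k"
    by (simp add: cyc_phase_def cyc_flux_def cyc_index_def ip_add)
  then show ?case
    using Cons.IH by (simp add: medge_weight_def cyc_weight_def distrib_left exp_add)
qed

lemma mat_trace_fiber_op_pow:
  assumes G: "fundamental_graph nu src tgt einv tau" and n: "1 \<le> n"
  shows "mat_trace (fiber_op nu src tgt tau alpha V k ^\<^sub>m n) =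
    (\<Sum>c\<in>mcycles nu src tgt n.
       complex_of_real (cyc_weight src V c) * exp (\<i> * complex_of_real (cyc_phase tau alpha c k)))"
  using mat_trace_pow_eq_closed_walk_sum[OF fiber_op_carrier finite_medges msrc_medges_less[OF G]
          fiber_op_entry n]
  by (simp add: mcycles_eq prod_list_medge_weight)

section \<open>Cycle reversal\<close>

context
  fixes S :: "'c set" and r :: "'c \<Rightarrow> 'c" and w f :: "'c \<Rightarrow> real"
  assumes r_in: "\<And>c. c \<in> S \<Longrightarrow> r c \<in> S" and r_r: "\<And>c. c \<in> S \<Longrightarrow> r (r c) = c"
    and w_r: "\<And>c. c \<in> S \<Longrightarrow> w (r c) = w c" and f_r: "\<And>c. c \<in> S \<Longrightarrow> f (r c) = - f c"
begin

lemma sum_exp_neg_phase_eq_sum_exp_phase: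
  "(\<Sum>c\<in>S. complex_of_real (w c) * exp (- \<i> * complex_of_real (f c)))
     = (\<Sum>c\<in>S. complex_of_real (w c) * exp (\<i> * complex_of_real (f c)))"
proof -
  have "(\<Sum>c\<in>S. complex_of_real (w c) * exp (- \<i> * complex_of_real (f c)))
      = (\<Sum>c\<in>S. complex_of_real (w (r c)) * exp (- \<i> * complex_of_real (f (r c))))"
    by (rule sum.reindex_bij_witness[of S r r]) (auto simp: r_in r_r)
  then show ?thesis
    by (simp add: w_r f_r cong: sum.cong)
qed

lemma sum_exp_neg_phase_eq_sum_cos:
  "(\<Sum>c\<in>S. complex_of_real (w c) * exp (- \<i> * complex_of_real (f c)))
     = (\<Sum>c\<in>S. complex_of_real (w c * cos (f c)))"
proof -
  have cos: "complex_of_real (w c * cos (f c))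
      = (complex_of_real (w c) * exp (\<i> * complex_of_real (f c))
         + complex_of_real (w c) * exp (- \<i> * complex_of_real (f c))) / 2" for c
    by (simp add: cos_exp_eq field_simps flip: cos_of_real)
  show ?thesis
    unfolding cos sum_divide_distrib[symmetric] sum.distrib sum_exp_neg_phase_eq_sum_exp_phase
    by simp
qed

end

definition medge_inv :: "('e \<Rightarrow> 'e) \<Rightarrow> 'e + nat \<Rightarrow> 'e + nat" where
  "medge_inv einv = map_sum einv id"

definition cycle_rev :: "('e \<Rightarrow> 'e) \<Rightarrow> ('e + nat) list \<Rightarrow> ('e + nat) list" where
  "cycle_rev einv c = rev (map (medge_inv einv) c)"

context
  fixes nu :: nat and src tgt :: "'e::finite \<Rightarrow> nat" and einv :: "'e \<Rightarrow> 'e"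
    and tau :: "'e \<Rightarrow> int^'d::finite" and alpha :: "'e \<Rightarrow> real"
  assumes G: "fundamental_graph nu src tgt einv tau" and M: "magnetic_potential einv alpha"
begin

lemma medge_inv_simps:
  "msrc src (medge_inv einv a) = mtgt tgt a" "mtgt tgt (medge_inv einv a) = msrc src a"
  "mvalid nu (medge_inv einv a) = mvalid nu a" "medge_inv einv (medge_inv einv a) = a"
  "momega src V (medge_inv einv a) = momega src V a" "mtau tau (medge_inv einv a) = - mtau tau a"
  "malpha alpha (medge_inv einv a) = - malpha alpha a"
  using G M by (cases a; simp add: medge_inv_def fundamental_graph_def magnetic_potential_def)+

lemma cycle_rev_mcycles: "c \<in> mcycles nu src tgt n \<Longrightarrow> cycle_rev einv c \<in> mcycles nu src tgt n"
  using walk_rev_map[of "msrc src" "medge_inv einv" "mtgt tgt"]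
  by (auto simp: mcycles_eq cycle_rev_def medges_def medge_inv_simps
           simp flip: closed_walk_iff_rotate1)

lemma cycle_rev_cycle_rev: "cycle_rev einv (cycle_rev einv c) = c"
  by (simp add: cycle_rev_def rev_map o_def medge_inv_simps)

lemma cyc_weight_cycle_rev: "cyc_weight src V (cycle_rev einv c) = cyc_weight src V c"
  by (simp add: cyc_weight_def cycle_rev_def o_def medge_inv_simps flip: rev_map)

lemma cyc_index_cycle_rev: "cyc_index tau (cycle_rev einv c) = - cyc_index tau c"
  by (simp add: cyc_index_def cycle_rev_def o_def medge_inv_simps sum_list_rev uminus_sum_list_map
           flip: rev_map)

lemma cyc_flux_cycle_rev: "cyc_flux alpha (cycle_rev einv c) = - cyc_flux alpha c"
  by (simp add: cyc_flux_def cycle_rev_def o_def medge_inv_simps sum_list_rev uminus_sum_list_map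
           flip: rev_map)

lemma cyc_phase_cycle_rev: "cyc_phase tau alpha (cycle_rev einv c) k = - cyc_phase tau alpha c k"
  by (simp add: cyc_phase_def cyc_flux_cycle_rev cyc_index_cycle_rev ip_uminus)

lemma trace_T_eq_sum_exp_phase:
  "trace_T nu src tgt tau alpha V n k =
    (\<Sum>c\<in>mcycles nu src tgt n.
       complex_of_real (cyc_weight src V c) * exp (\<i> * complex_of_real (cyc_phase tau alpha c k)))"
  unfolding trace_T_def
  by (rule sum_exp_neg_phase_eq_sum_exp_phase[where r = "cycle_rev einv"
        and w = "cyc_weight src V" and f = "\<lambda>c. cyc_phase tau alpha c k"])
     (simp_all add: cycle_rev_mcycles cycle_rev_cycle_rev cyc_weight_cycle_rev cyc_phase_cycle_rev)

lemma trace_T_eq_sum_cos: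
  "trace_T nu src tgt tau alpha V n k =
    (\<Sum>c\<in>mcycles nu src tgt n. complex_of_real (cyc_weight src V c * cos (cyc_phase tau alpha c k)))"
  unfolding trace_T_def
  by (rule sum_exp_neg_phase_eq_sum_cos[where r = "cycle_rev einv"
        and w = "cyc_weight src V" and f = "\<lambda>c. cyc_phase tau alpha c k"])
     (simp_all add: cycle_rev_mcycles cycle_rev_cycle_rev cyc_weight_cycle_rev cyc_phase_cycle_rev)

lemma trace_Tm_zero_eq_sum_cos:
  "trace_Tm nu src tgt tau alpha V n 0 =
    (\<Sum>c\<in>{c\<in>mcycles nu src tgt n. cyc_index tau c = 0}.
       complex_of_real (cyc_weight src V c * cos (cyc_flux alpha c)))"
  unfolding trace_Tm_def
  by (rule sum_exp_neg_phase_eq_sum_cos[where r = "cycle_rev einv"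
        and w = "cyc_weight src V" and f = "cyc_flux alpha"])
     (simp_all add: cycle_rev_mcycles cycle_rev_cycle_rev cyc_weight_cycle_rev cyc_flux_cycle_rev
                    cyc_index_cycle_rev)

end

section \<open>Fourier expansion in the quasimomentum\<close>

definition real_of_int_vec :: "int^'d::finite \<Rightarrow> real^'d" where
  "real_of_int_vec m = (\<chi> i. real_of_int (m $ i))"

lemma real_of_int_vec_add: "real_of_int_vec (a + b) = real_of_int_vec a + real_of_int_vec b"
  by (simp add: real_of_int_vec_def Finite_Cartesian_Product.vec_eq_iff)

lemma ivnorm_eq_norm: "ivnorm m = norm (real_of_int_vec m)"
  by (simp add: ivnorm_def norm_vec_def L2_set_def real_of_int_vec_def)

lemma ivnorm_le_tau_plus: "ivnorm (tau e) \<le> tau_plus tau"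
  unfolding tau_plus_def by (rule Max_ge) auto

lemma tau_plus_nonneg: "0 \<le> tau_plus tau"
  using ivnorm_le_tau_plus[of tau undefined] by (simp add: ivnorm_eq_norm order_trans[OF norm_ge_zero])

lemma ivnorm_cyc_index_le: "ivnorm (cyc_index tau c) \<le> real (length c) * tau_plus tau"
proof (induction c)
  case Nil
  then show ?case by (simp add: cyc_index_def ivnorm_def)
next
  case (Cons a c)
  have a: "ivnorm (mtau tau a) \<le> tau_plus tau"
    using ivnorm_le_tau_plus[of tau] tau_plus_nonneg[of tau] by (cases a) (auto simp: ivnorm_def)
  have "ivnorm (cyc_index tau (a # c)) \<le> ivnorm (mtau tau a) + ivnorm (cyc_index tau c)"
    by (simp add: cyc_index_def ivnorm_eq_norm real_of_int_vec_add norm_triangle_ineq)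
  with a Cons.IH show ?case by (simp add: algebra_simps)
qed

lemma finite_ivnorm_le: "finite {m :: int^'d::finite. ivnorm m \<le> R}"
proof -
  define N where "N = \<lceil>R\<rceil>"
  have "m $ i \<in> {-N..N}" if "ivnorm m \<le> R" for m :: "int^'d" and i
  proof -
    have "real_of_int \<bar>m $ i\<bar> \<le> norm (real_of_int_vec m)"
      using component_le_norm_cart[of "real_of_int_vec m" i] by (simp add: real_of_int_vec_def)
    with that have "\<bar>m $ i\<bar> \<le> N" unfolding N_def ivnorm_eq_norm by linarith
    then show ?thesis by (auto simp: abs_le_iff)
  qed
  then have "{m :: int^'d. ivnorm m \<le> R} \<subseteq> vec_lambda ` Pi\<^sub>E UNIV (\<lambda>_. {-N..N})"
    by (auto intro!: image_eqI[where x = "vec_nth _"])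
  then show ?thesis
    by (rule finite_subset) (intro finite_imageI finite_PiE, auto)
qed

lemma trace_T_eq_fourier_sum:
  "trace_T nu src tgt tau alpha V n k =
    (\<Sum>m\<in>{m. ivnorm m \<le> real n * tau_plus tau}.
       trace_Tm nu src tgt tau alpha V n m * exp (- \<i> * complex_of_real (ip m k)))"
proof -
  let ?C = "mcycles nu src tgt n"
  let ?w = "\<lambda>c. complex_of_real (cyc_weight src V c) * exp (- \<i> * complex_of_real (cyc_flux alpha c))"
  have phase: "exp (- \<i> * complex_of_real (cyc_phase tau alpha c k))
      = exp (- \<i> * complex_of_real (cyc_flux alpha c)) * exp (- \<i> * complex_of_real (ip (cyc_index tau c) k))"
    for c by (simp add: cyc_phase_def ring_distribs flip: exp_add)
  have "finite ?C"
    by (rule finite_subset[OF _ finite_lists_length_eq[OF finite_medges, of nu n]])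
       (auto simp: mcycles_eq)
  moreover have "cyc_index tau c \<in> {m. ivnorm m \<le> real n * tau_plus tau}" if "c \<in> ?C" for c
    using ivnorm_cyc_index_le[of tau c] that by (simp add: mcycles_def)
  ultimately have "trace_T nu src tgt tau alpha V n k =
      (\<Sum>m\<in>{m. ivnorm m \<le> real n * tau_plus tau}. \<Sum>c\<in>{c\<in>?C. cyc_index tau c = m}.
         ?w c * exp (- \<i> * complex_of_real (ip (cyc_index tau c) k)))"
    unfolding trace_T_def phase mult.assoc[symmetric]
    by (intro sum.group[symmetric] finite_ivnorm_le) auto
  then show ?thesis
    by (simp add: trace_Tm_def sum_distrib_right)
qed

lemma integral_lborel_prod_Basis:
  fixes f :: "'a::euclidean_space \<Rightarrow> real \<Rightarrow> complex"
  assumes int: "\<And>b. b \<in> Basis \<Longrightarrow> integrable lborel (f b)"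
  shows "(\<integral>x. (\<Prod>b\<in>Basis. f b (x \<bullet> b)) \<partial>(lborel :: 'a measure))
       = (\<Prod>b\<in>Basis. \<integral>t. f b t \<partial>lborel)"
proof -
  interpret product_sigma_finite "\<lambda>_::'a. lborel :: real measure"
    by standard
  have [measurable]: "b \<in> Basis \<Longrightarrow> f b \<in> borel_measurable borel" for b
    using borel_measurable_integrable[OF int] by simp
  have "(\<integral>x. (\<Prod>b\<in>Basis. f b (x \<bullet> b)) \<partial>(lborel :: 'a measure))
      = (\<integral>x. (\<Prod>b\<in>Basis. f b ((\<Sum>b'\<in>Basis. x b' *\<^sub>R b') \<bullet> b)) \<partial>(\<Pi>\<^sub>M b\<in>Basis. lborel))"
    by (subst lborel_eq) (rule integral_distr, measurable)
  also have "\<dots> = (\<integral>x. (\<Prod>b\<in>Basis. f b (x b)) \<partial>(\<Pi>\<^sub>M b\<in>Basis. lborel))"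
    by (intro Bochner_Integration.integral_cong refl prod.cong)
       (simp add: inner_sum_left inner_Basis if_distrib sum.delta cong: if_cong)
  also have "\<dots> = (\<Prod>b\<in>Basis. \<integral>t. f b t \<partial>lborel)"
    by (rule product_integral_prod) (auto intro: int)
  finally show ?thesis .
qed

lemma integral_exp_int_frequency:
  fixes z :: int
  shows "integral {0..2 * pi} (\<lambda>t. exp (- \<i> * complex_of_real (of_int z * t)))
       = (if z = 0 then complex_of_real (2 * pi) else 0)"
proof (cases "z = 0")
  case True
  then show ?thesis by (simp add: scaleR_conv_of_real)
next
  case False
  define F where "F t = exp (- \<i> * complex_of_real (of_int z * t)) / (- \<i> * of_int z)" for t
  have "((\<lambda>t. exp (- \<i> * complex_of_real (of_int z * t))) has_integral F (2 * pi) - F 0) {0..2 * pi}"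
  proof (rule fundamental_theorem_of_calculus)
    fix x assume "x \<in> {0..2 * pi}"
    have "((\<lambda>u. exp (- \<i> * (of_int z * u)) / (- \<i> * of_int z)) has_field_derivative
            exp (- \<i> * complex_of_real (of_int z * x))) (at (complex_of_real x))"
      using False by (auto intro!: derivative_eq_intros simp: field_simps)
    from has_vector_derivative_real_field[OF this]
    show "(F has_vector_derivative exp (- \<i> * complex_of_real (of_int z * x))) (at x within {0..2 * pi})"
      unfolding F_def by simp
  qed simp
  moreover have "F (2 * pi) = F 0"
  proof -
    have "exp (- \<i> * complex_of_real (of_int z * (2 * pi))) = cis (- (2 * pi * of_int z))"
      by (simp add: cis_conv_exp mult.commute)
    also have "\<dots> = 1"
      by (simp add: complex_eq_iff)
    finally show ?thesis unfolding F_def by simp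
  qed
  ultimately show ?thesis
    using False by (simp add: integral_unique)
qed

lemma integral_cbox_exp_inner:
  fixes l u r :: "'a::euclidean_space"
  shows "integral (cbox l u) (\<lambda>k. exp (- \<i> * complex_of_real (r \<bullet> k)))
       = (\<Prod>b\<in>Basis. integral {l \<bullet> b..u \<bullet> b} (\<lambda>t. exp (- \<i> * complex_of_real ((r \<bullet> b) * t))))"
proof -
  define f where "f b t = indicator {l \<bullet> b..u \<bullet> b} t *\<^sub>R exp (- \<i> * complex_of_real ((r \<bullet> b) * t))"
    for b :: 'a and t :: real
  define g where "g k = exp (- \<i> * complex_of_real (r \<bullet> k))" for k :: 'a
  have f_int: "integrable lborel (f b)" for b
    unfolding f_def by (rule borel_integrable_compact) (auto intro!: continuous_intros)
  have g_int: "integrable lborel (\<lambda>k. indicator (cbox l u) k *\<^sub>R g k)"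
    unfolding g_def by (rule borel_integrable_compact) (auto intro!: continuous_intros)
  have indicator_cbox: "indicator (cbox l u) k = (\<Prod>b\<in>Basis. indicator {l \<bullet> b..u \<bullet> b} (k \<bullet> b) :: real)"
    for k
    by (auto simp: indicator_def mem_box prod_zero_iff)
  have "g k = (\<Prod>b\<in>Basis. exp (- \<i> * complex_of_real ((r \<bullet> b) * (k \<bullet> b))))" for k
    unfolding g_def by (subst euclidean_inner) (simp add: sum_distrib_left exp_sum)
  then have g_prod: "indicator (cbox l u) k *\<^sub>R g k = (\<Prod>b\<in>Basis. f b (k \<bullet> b))" for k
    unfolding indicator_cbox f_def by (simp add: prod.distrib scaleR_conv_of_real)
  have "integral (cbox l u) g = integral UNIV (\<lambda>k. indicator (cbox l u) k *\<^sub>R g k)"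
    by (simp add: indicator_scaleR_eq_if integral_restrict_UNIV)
  also have "\<dots> = (\<integral>k. indicator (cbox l u) k *\<^sub>R g k \<partial>lborel)"
    by (rule integral_lborel[OF g_int])
  also have "\<dots> = (\<Prod>b\<in>Basis. \<integral>t. f b t \<partial>lborel)"
    by (simp add: g_prod integral_lborel_prod_Basis f_int)
  also have "\<dots> = (\<Prod>b\<in>Basis. integral UNIV (f b))"
    by (simp add: integral_lborel[OF f_int])
  also have "\<dots> = (\<Prod>b\<in>Basis. integral {l \<bullet> b..u \<bullet> b} (\<lambda>t. exp (- \<i> * complex_of_real ((r \<bullet> b) * t))))"
  proof -
    have "f b = (\<lambda>t. if t \<in> {l \<bullet> b..u \<bullet> b} then exp (- \<i> * complex_of_real ((r \<bullet> b) * t)) else 0)" for b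
      by (simp add: f_def fun_eq_iff indicator_scaleR_eq_if)
    then show ?thesis by (simp only: integral_restrict_UNIV)
  qed
  finally show ?thesis unfolding g_def .
qed

lemma integral_torus_exp_ip:
  fixes m :: "int^'d::finite"
  shows "integral (cbox (0::real^'d) (\<chi> i. 2 * pi)) (\<lambda>k. exp (- \<i> * complex_of_real (ip m k)))
       = (if m = 0 then complex_of_real ((2 * pi) ^ CARD('d)) else 0)"
proof -
  let ?r = "real_of_int_vec m"
  have "ip m k = ?r \<bullet> k" for k
    by (simp add: ip_def real_of_int_vec_def inner_vec_def)
  then have "integral (cbox (0::real^'d) (\<chi> i. 2 * pi)) (\<lambda>k. exp (- \<i> * complex_of_real (ip m k)))
      = (\<Prod>b\<in>Basis. integral {0 \<bullet> b..(\<chi> i. 2 * pi) \<bullet> b}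
                        (\<lambda>t. exp (- \<i> * complex_of_real ((?r \<bullet> b) * t))))"
    by (simp only: integral_cbox_exp_inner)
  also have "(Basis :: (real^'d) set) = range (\<lambda>i. axis i 1)"
    by (auto simp: Basis_vec_def)
  also have "(\<Prod>b\<in>range (\<lambda>i. axis i 1). integral {0 \<bullet> b..(\<chi> i. 2 * pi) \<bullet> b}
                        (\<lambda>t. exp (- \<i> * complex_of_real ((?r \<bullet> b) * t))))
      = (\<Prod>i\<in>UNIV. integral {0..2 * pi} (\<lambda>t. exp (- \<i> * complex_of_real (of_int (m $ i) * t))))"
    by (subst prod.reindex) (auto simp: inj_on_def axis_eq_axis inner_axis real_of_int_vec_def)
  also have "\<dots> = (\<Prod>i\<in>UNIV. if m $ i = 0 then complex_of_real (2 * pi) else 0)"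
    by (simp only: integral_exp_int_frequency)
  also have "\<dots> = (if m = 0 then complex_of_real ((2 * pi) ^ CARD('d)) else 0)"
    by (auto simp: prod_zero_iff Finite_Cartesian_Product.vec_eq_iff)
  finally show ?thesis .
qed

lemma torus_mean_fourier_sum:
  fixes a :: "int^'d::finite \<Rightarrow> complex"
  assumes M: "finite M" "0 \<in> M"
  shows "complex_of_real (1 / (2 * pi) ^ CARD('d)) *
      integral (cbox (0::real^'d) (\<chi> i. 2 * pi)) (\<lambda>k. \<Sum>m\<in>M. a m * exp (- \<i> * complex_of_real (ip m k)))
    = a 0"
proof -
  let ?B = "cbox (0::real^'d) (\<chi> i. 2 * pi)"
  have "continuous_on ?B (\<lambda>k. ip m k)" for m :: "int^'d"
    unfolding ip_def by (intro continuous_intros)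
  then have "(\<lambda>k. a m * exp (- \<i> * complex_of_real (ip m k))) integrable_on ?B" for m
    by (intro integrable_continuous continuous_intros)
  then have "integral ?B (\<lambda>k. \<Sum>m\<in>M. a m * exp (- \<i> * complex_of_real (ip m k)))
      = (\<Sum>m\<in>M. integral ?B (\<lambda>k. a m * exp (- \<i> * complex_of_real (ip m k))))"
    by (rule integral_sum[OF M(1)])
  also have "\<dots> = (\<Sum>m\<in>M. a m * (if m = 0 then complex_of_real ((2 * pi) ^ CARD('d)) else 0))"
    by (simp only: integral_mult_right integral_torus_exp_ip)
  also have "\<dots> = a 0 * complex_of_real ((2 * pi) ^ CARD('d))"
    using M by (simp add: if_distrib[of "\<lambda>u. _ * u"] sum.delta cong: if_cong)
  finally show ?thesis by simp
qed

theorem theorem2p6: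
  fixes nu :: nat and src tgt :: "'e::finite \<Rightarrow> nat" and einv :: "'e \<Rightarrow> 'e"
    and tau :: "'e \<Rightarrow> int^'d::finite" and alpha :: "'e \<Rightarrow> real" and V :: "nat \<Rightarrow> real"
    and n :: nat
  assumes "fundamental_graph nu src tgt einv tau"
    and "periodic_connected nu src tgt tau"
    and "magnetic_potential einv alpha"
    and "1 \<le> n"
  shows "(\<forall>k. mat_trace (fiber_op nu src tgt tau alpha V k ^\<^sub>m n)
              = sum_mset (image_mset (\<lambda>l. l ^ n) (proots (char_poly (fiber_op nu src tgt tau alpha V k))))
           \<and> sum_mset (image_mset (\<lambda>l. l ^ n) (proots (char_poly (fiber_op nu src tgt tau alpha V k))))
              = trace_T nu src tgt tau alpha V n k
           \<and> trace_T nu src tgt tau alpha V n k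
              = (\<Sum>c\<in>mcycles nu src tgt n. complex_of_real (cyc_weight src V c * cos (cyc_phase tau alpha c k)))
           \<and> trace_T nu src tgt tau alpha V n k
              = (\<Sum>m\<in>{m. ivnorm m \<le> real n * tau_plus tau}.
                   trace_Tm nu src tgt tau alpha V n m * exp (- \<i> * complex_of_real (ip m k))))
       \<and> complex_of_real (1 / (2 * pi) ^ CARD('d)) *
           integral (cbox (0::real^'d) (\<chi> i. 2 * pi))
             (\<lambda>k. mat_trace (fiber_op nu src tgt tau alpha V k ^\<^sub>m n))
           = trace_Tm nu src tgt tau alpha V n 0
       \<and> trace_Tm nu src tgt tau alpha V n 0
           = (\<Sum>c\<in>{c\<in>mcycles nu src tgt n. cyc_index tau c = 0}.
                complex_of_real (cyc_weight src V c * cos (cyc_flux alpha c)))"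
proof -
  note G = assms(1) and M = assms(3) and n = assms(4)
  let ?H = "fiber_op nu src tgt tau alpha V"
  have trace: "mat_trace (?H k ^\<^sub>m n) = trace_T nu src tgt tau alpha V n k" for k
    using mat_trace_fiber_op_pow[OF G n] trace_T_eq_sum_exp_phase[OF G M] by simp
  have "(0 :: int^'d) \<in> {m. ivnorm m \<le> real n * tau_plus tau}"
    using tau_plus_nonneg[of tau] by (simp add: ivnorm_def)
  from torus_mean_fourier_sum[OF finite_ivnorm_le this]
  have mean: "complex_of_real (1 / (2 * pi) ^ CARD('d)) *
      integral (cbox (0::real^'d) (\<chi> i. 2 * pi)) (\<lambda>k. mat_trace (?H k ^\<^sub>m n))
      = trace_Tm nu src tgt tau alpha V n 0"
    by (simp add: trace trace_T_eq_fourier_sum)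
  have eigen: "mat_trace (?H k ^\<^sub>m n)
      = sum_mset (image_mset (\<lambda>l. l ^ n) (proots (char_poly (?H k))))" for k
    by (rule mat_trace_pow_eq_sum_eigenvalue_powers[OF fiber_op_carrier])
  show ?thesis
    by (intro conjI allI eigen mean trace_T_eq_sum_cos[OF G M] trace_T_eq_fourier_sum
          trace_Tm_zero_eq_sum_cos[OF G M])
       (simp only: eigen[symmetric] trace)
qed

end
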